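(* Let $p=n^{\delta-1}$ with $0<\delta<1$, let $H$ be a graph on $m$ vertices with $m$ dividing $n$, and let $k'\le m$, $k'\le k\le n-m$ with $k-k'\ge 6n^{1-\delta}\log n$. Let $\tilde G_H\sim G_H(n,p,k)$, with planted vertex set $M$ and planted independent set $I'$ of size $k-k'$ among the vertices having no neighbor in $M$. For every integer $t$ with $1\le t\le\frac{k-k'}{2}$, with probability at least $1-2/n$, every set $Q\subset V\setminus(M\cup I')$ of vertices of $\tilde G_H[V\setminus M]$ with $|Q|=t<k-k'$ has at least $t+1$ neighbors in $I'$.
   Context: $G(n,p)$ is the Erdős–Rényi random graph on $V=[n]$. With $H$ on vertex set $[m]$, partition $[n]$ into parts $P_i=\{(i-1)\frac nm+1,\dots,i\frac nm\}$. Distribution $G_H(n,p,k)$: sample $G'\sim G(n,p)$; choose a uniformly random $M=\{v_1,\dots,v_m\}$ with $v_i\in P_i$ and replace $G'[M]$ by a copy of $H$ with vertex $i$ at $v_i$, giving $G_H$; among the vertices of $G_H$ with no neighbor in $M$, choose a uniformly random set $I'$ of size $k-k'$ and delete all edges inside $I'$, giving $\tilde G_H$ (if fewer than $k-k'$ such vertices exist, instead delete all edges inside a uniformly random set of $k$ vertices of $G_H$). *)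

theory Defs
  imports "HOL-Probability.Probability"
begin

text \<open>Graphs on a vertex set are represented by their edge sets: sets of 2-element sets.
  Vertices are 0..n-1 (0-based version of [n]); H lives on 0..m-1.\<close>

definition all_edges :: "nat set \<Rightarrow> nat set set" where
  "all_edges V = {e. \<exists>u v. u \<in> V \<and> v \<in> V \<and> u \<noteq> v \<and> e = {u, v}}"

definition gnp_pmf :: "nat \<Rightarrow> real \<Rightarrow> nat set set pmf" where
  "gnp_pmf n p = map_pmf (\<lambda>f. {e \<in> all_edges {0..<n}. f e})
      (Pi_pmf (all_edges {0..<n}) False (\<lambda>_. bernoulli_pmf p))"

definition part :: "nat \<Rightarrow> nat \<Rightarrow> nat \<Rightarrow> nat set" where
  "part n m i = {i * (n div m) ..< (Suc i) * (n div m)}"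

text \<open>Replace G'[M] by a copy of H with vertex i placed at v i.\<close>
definition plant :: "nat \<Rightarrow> nat set set \<Rightarrow> (nat \<Rightarrow> nat) \<Rightarrow> nat set set \<Rightarrow> nat set set" where
  "plant m H v E = {e \<in> E. \<not> e \<subseteq> v ` {0..<m}} \<union> (\<lambda>e. v ` e) ` H"

definition no_nbr :: "nat \<Rightarrow> nat set set \<Rightarrow> nat set \<Rightarrow> nat set" where
  "no_nbr n E M = {u \<in> {0..<n}. \<forall>w \<in> M. {u, w} \<notin> E}"

definition Iset_pmf :: "nat \<Rightarrow> nat \<Rightarrow> nat \<Rightarrow> nat set \<Rightarrow> nat set pmf" where
  "Iset_pmf n k k' W =
     (if k - k' \<le> card W then pmf_of_set {S. S \<subseteq> W \<and> card S = k - k'}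
      else pmf_of_set {S. S \<subseteq> {0..<n} \<and> card S = k})"

definition delete_inside :: "nat set set \<Rightarrow> nat set \<Rightarrow> nat set set" where
  "delete_inside E I = {e \<in> E. \<not> e \<subseteq> I}"

definition GH_pmf :: "nat \<Rightarrow> nat \<Rightarrow> nat set set \<Rightarrow> real \<Rightarrow> nat \<Rightarrow> nat \<Rightarrow>
    (nat set set \<times> nat set \<times> nat set) pmf" where
  "GH_pmf n m H p k k' =
     bind_pmf (gnp_pmf n p) (\<lambda>E'.
     bind_pmf (pmf_of_set (PiE {0..<m} (part n m))) (\<lambda>v.
       let M = v ` {0..<m}; EH = plant m H v E' in
       bind_pmf (Iset_pmf n k k' (no_nbr n EH M)) (\<lambda>I.
         return_pmf (delete_inside EH I, M, I))))"

end

theory Submission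
  imports Defs
begin

(* If a t-set Q outside M \<union> I' has at most t neighbours in I', then I' contains a set T of
   |I'| - t \<ge> (k - k')/2 vertices with no neighbour in Q. Edges between Q and I' are edges of
   G(n,p) that neither the planted copy of H nor the emptying of I' touches, so all t|T| edges
   between Q and T are missing from G', which has probability (1-p)^(t|T|) \<le> n^(-3t).
   This event is independent of the set of eligible vertices outside Q, and forcing I' to avoid Q
   can only make a fixed T \<subseteq> I' likelier than choosing I' among the eligible vertices outside Q.
   A union bound over the at most n^t sets Q and, for each I', the at most n^t sets T bounds the
   failure probability by n^(-t) \<le> 1/n. *)

lemma finite_all_edges: "finite V \<Longrightarrow> finite (all_edges V)"
  unfolding all_edges_def by (rule finite_subset[of _ "Pow V"]) auto

lemma nn_integral_gnp_pmf_indicator_disjoint: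
  fixes F :: "nat set set \<Rightarrow> ennreal"
  assumes D: "D \<subseteq> all_edges {0..<n}" and p: "0 \<le> p" "p \<le> 1"
    and F: "\<And>E. F E = F (E - D)"
  shows "(\<integral>\<^sup>+E. F E * indicator {E. E \<inter> D = {}} E \<partial>gnp_pmf n p)
       = (\<integral>\<^sup>+E. F E \<partial>gnp_pmf n p) * ennreal ((1 - p) ^ card D)"
proof -
  define A where "A = all_edges {0..<n}"
  define B where "B X = Pi_pmf X False (\<lambda>_. bernoulli_pmf p)" for X :: "nat set set"
  define glue where "glue = (\<lambda>(f, g) x. if x \<in> A - D then f x else g x :: bool)"
  have finA: "finite A" and finD: "finite D"
    using D finite_all_edges finite_subset unfolding A_def by blast+
  have partition: "A = (A - D) \<union> D" using D A_def by auto
  have split: "B A = map_pmf glue (pair_pmf (B (A - D)) (B D))"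
    unfolding B_def glue_def by (subst (1) partition, rule Pi_pmf_union) (use finA finD in auto)
  have outside: "{e \<in> A. glue (f, g) e} - D = {e \<in> A - D. f e}" for f g
    unfolding glue_def by auto
  have inside: "({e \<in> A. glue (f, g) e} \<inter> D = {}) = (g \<in> Pi D (\<lambda>_. {False}))" for f g
    unfolding glue_def using D A_def by auto
  have absent: "emeasure (B D) (Pi D (\<lambda>_. {False})) = ennreal ((1 - p) ^ card D)"
    unfolding B_def using finD p
    by (simp add: measure_pmf.emeasure_eq_measure measure_Pi_pmf_Pi measure_pmf_single)
  have "(\<integral>\<^sup>+E. F E * indicator {E. E \<inter> D = {}} E \<partial>gnp_pmf n p)
      = (\<integral>\<^sup>+f. \<integral>\<^sup>+g. F {e \<in> A - D. f e} * indicator (Pi D (\<lambda>_. {False})) g \<partial>B D \<partial>B (A - D))"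
    unfolding gnp_pmf_def A_def[symmetric] B_def[symmetric] split
    by (simp add: nn_integral_pair_pmf' indicator_def inside F[of "{e \<in> A. glue _ e}"] outside
        del: Pi_iff)
  also have "\<dots> = (\<integral>\<^sup>+f. F {e \<in> A - D. f e} \<partial>B (A - D)) * ennreal ((1 - p) ^ card D)"
    by (simp add: nn_integral_cmult nn_integral_multc absent)
  also have "(\<integral>\<^sup>+f. F {e \<in> A - D. f e} \<partial>B (A - D)) = (\<integral>\<^sup>+E. F E \<partial>gnp_pmf n p)"
    unfolding gnp_pmf_def A_def[symmetric] B_def[symmetric] split
    by (simp add: nn_integral_pair_pmf' F[of "{e \<in> A. glue _ e}"] outside
        measure_pmf.emeasure_space_1)
  finally show ?thesis .
qed

lemma finite_subsets_card_eq: "finite W \<Longrightarrow> finite {S. S \<subseteq> W \<and> card S = s}"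
  by (rule finite_subset[of _ "Pow W"]) auto

lemma subsets_card_eq_nonempty: "finite W \<Longrightarrow> s \<le> card W \<Longrightarrow> {S. S \<subseteq> W \<and> card S = s} \<noteq> {}"
  using n_subsets[of W s] zero_less_binomial[of s "card W"] by (metis card.empty less_irrefl)

lemma nn_integral_pmf_of_set_le_subset:
  assumes "finite B" "A \<noteq> {}" "A \<subseteq> B" "\<And>x. x \<in> B - A \<Longrightarrow> f x = 0"
  shows "(\<integral>\<^sup>+x. f x \<partial>pmf_of_set B) \<le> (\<integral>\<^sup>+x. f x \<partial>pmf_of_set A)"
proof -
  have finA: "finite A" using assms finite_subset by blast
  have cards: "0 < card A" "card A \<le> card B"
    using assms finA by (auto simp: card_gt_0_iff card_mono)
  have "inverse (of_nat (card B) :: ennreal) \<le> inverse (of_nat (card A))"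
    using cards by (simp add: ennreal_of_nat_eq_real_of_nat inverse_ennreal le_imp_inverse_le)
  moreover have "sum f B = sum f A"
    using assms by (intro sum.mono_neutral_right) auto
  moreover have "B \<noteq> {}" using assms by blast
  ultimately show ?thesis
    using assms finA by (simp add: nn_integral_pmf_of_set divide_ennreal_def mult_left_mono)
qed

lemma nn_integral_Iset_pmf_disjoint_le:
  fixes f :: "nat set \<Rightarrow> ennreal"
  assumes W: "finite W"
  shows "(\<integral>\<^sup>+I. f I * indicator {I. Q \<inter> I = {}} I \<partial>Iset_pmf n k k' W)
       \<le> (\<integral>\<^sup>+I. f I \<partial>Iset_pmf n k k' (W - Q))"
proof -
  define s where "s = k - k'"
  define subs where "subs X = {S. S \<subseteq> X \<and> card S = s}" for X :: "nat set"
  have finW': "finite (W - Q)" using W by auto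
  have cW: "card (W - Q) \<le> card W" using W by (simp add: card_mono)
  consider "s \<le> card (W - Q)" | "s \<le> card W" "\<not> s \<le> card (W - Q)" | "\<not> s \<le> card W"
    by linarith
  then show ?thesis
  proof cases
    case 1
    then have "(\<integral>\<^sup>+I. f I * indicator {I. Q \<inter> I = {}} I \<partial>pmf_of_set (subs W))
        \<le> (\<integral>\<^sup>+I. f I * indicator {I. Q \<inter> I = {}} I \<partial>pmf_of_set (subs (W - Q)))"
      using W finW' unfolding subs_def
      by (intro nn_integral_pmf_of_set_le_subset finite_subsets_card_eq subsets_card_eq_nonempty)
        (auto simp: indicator_def)
    also have "\<dots> \<le> (\<integral>\<^sup>+I. f I \<partial>pmf_of_set (subs (W - Q)))"
      by (intro nn_integral_mono) (simp add: indicator_def)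
    finally show ?thesis using 1 cW unfolding Iset_pmf_def s_def[symmetric] subs_def by simp
  next
    case 2
    have "Q \<inter> S \<noteq> {}" if "S \<in> subs W" for S
    proof
      assume "Q \<inter> S = {}"
      then have "S \<subseteq> W - Q" using that unfolding subs_def by blast
      then show False using that 2 card_mono[OF finW'] unfolding subs_def by fastforce
    qed
    moreover have "subs W \<noteq> {}" "finite (subs W)"
      using 2 W subsets_card_eq_nonempty finite_subsets_card_eq unfolding subs_def by auto
    ultimately have "(\<integral>\<^sup>+I. f I * indicator {I. Q \<inter> I = {}} I \<partial>pmf_of_set (subs W)) = 0"
      by (simp add: nn_integral_pmf_of_set)
    then show ?thesis using 2 unfolding Iset_pmf_def s_def[symmetric] subs_def by simp
  next
    case 3
    then show ?thesis using cW unfolding Iset_pmf_def s_def[symmetric]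
      by (auto intro!: nn_integral_mono simp: indicator_def)
  qed
qed

lemma set_pmf_Iset_pmf:
  assumes "W \<subseteq> {0..<n}" "k \<le> n" "I \<in> set_pmf (Iset_pmf n k k' W)"
  shows "I \<subseteq> {0..<n}" "k - k' \<le> card I"
proof -
  have "finite W" using assms(1) finite_subset by blast
  moreover have "k \<le> card {0..<n}" using assms(2) by simp
  ultimately have "I \<subseteq> {0..<n} \<and> k - k' \<le> card I"
    using assms subsets_card_eq_nonempty finite_subsets_card_eq
    by (cases "k - k' \<le> card W") (fastforce simp: Iset_pmf_def)+
  then show "I \<subseteq> {0..<n}" "k - k' \<le> card I" by auto
qed

definition cross_edges :: "nat set \<Rightarrow> nat set \<Rightarrow> nat set set" where
  "cross_edges Q T = (\<lambda>(q, x). {q, x}) ` (Q \<times> T)"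

lemma card_cross_edges: "Q \<inter> T = {} \<Longrightarrow> card (cross_edges Q T) = card Q * card T"
  unfolding cross_edges_def
  by (subst card_image) (auto simp: inj_on_def doubleton_eq_iff card_cartesian_product)

lemma cross_edges_subset_all_edges:
  "Q \<subseteq> V \<Longrightarrow> T \<subseteq> V \<Longrightarrow> Q \<inter> T = {} \<Longrightarrow> cross_edges Q T \<subseteq> all_edges V"
  unfolding cross_edges_def all_edges_def by (auto 0 4)

lemma no_nbr_plant_Diff_cross_edges:
  assumes "Q \<inter> v ` {0..<m} = {}"
  shows "no_nbr n (plant m H v (E - cross_edges Q T)) (v ` {0..<m}) - Q
       = no_nbr n (plant m H v E) (v ` {0..<m}) - Q"
proof -
  have "{u, w} \<notin> cross_edges Q T" if "u \<notin> Q" "w \<in> v ` {0..<m}" for u w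
    using that assms unfolding cross_edges_def by (auto simp: doubleton_eq_iff)
  then show ?thesis unfolding no_nbr_def plant_def by auto
qed

lemma no_nbr_subset: "no_nbr n E M \<subseteq> {0..<n}"
  unfolding no_nbr_def by auto

lemma edge_in_delete_inside_plant:
  assumes "{q, u} \<in> E" "q \<notin> v ` {0..<m}" "q \<notin> I"
  shows "{q, u} \<in> delete_inside (plant m H v E) I"
  using assms unfolding delete_inside_def plant_def by auto

lemma non_expanding_witness:
  assumes I: "finite I" "t \<le> card I" and Q: "Q \<inter> (v ` {0..<m} \<union> I) = {}"
    and few: "card {u \<in> I. \<exists>q \<in> Q. {q, u} \<in> delete_inside (plant m H v E) I} \<le> t"
  obtains T where "T \<subseteq> I" "card T + t = card I" "E \<inter> cross_edges Q T = {}"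
proof -
  define N where "N = {u \<in> I. \<exists>q \<in> Q. {q, u} \<in> delete_inside (plant m H v E) I}"
  have "card (I - N) = card I - card N"
    using I by (intro card_Diff_subset) (auto simp: N_def)
  then have "card I - t \<le> card (I - N)" using few unfolding N_def by linarith
  then obtain T where T: "T \<subseteq> I - N" "card T = card I - t"
    using obtain_subset_with_card_n by metis
  have "{q, x} \<notin> E" if "q \<in> Q" "x \<in> T" for q x
    using that T Q edge_in_delete_inside_plant[of q x E v m I H] unfolding N_def by blast
  then have "E \<inter> cross_edges Q T = {}" unfolding cross_edges_def by auto
  then show thesis using T I by (intro that[of T]) auto
qed

lemma card_subsets_card_add_eq:
  assumes "finite I" "t \<le> card I"
  shows "card {T. T \<subseteq> I \<and> card T + t = card I} = card I choose t"
proof -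
  have "{T. T \<subseteq> I \<and> card T + t = card I} = {T. T \<subseteq> I \<and> card T = card I - t}"
    using assms by auto
  then show ?thesis
    using assms by (simp add: n_subsets binomial_symmetric[symmetric])
qed

lemma sum_indicator_subsets_card_add_le:
  assumes "finite \<T>" "I \<subseteq> {0..<n}" "t \<le> card I"
  shows "(\<Sum>T\<in>\<T>. indicator {I. T \<subseteq> I \<and> card T + t = card I} I :: ennreal) \<le> of_nat (n ^ t)"
proof -
  have finI: "finite I" using assms finite_subset by blast
  have "(\<Sum>T\<in>\<T>. indicator {I. T \<subseteq> I \<and> card T + t = card I} I :: ennreal)
      = of_nat (card {T \<in> \<T>. T \<subseteq> I \<and> card T + t = card I})"
    using assms(1) by (simp add: indicator_def sum.If_cases Int_def conj_commute)
  also have "\<dots> \<le> of_nat (card I choose t)"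
    using finI assms(3) finite_subsets_card_eq[OF finI]
    by (auto intro!: card_mono simp flip: card_subsets_card_add_eq)
  also have "card I choose t \<le> n ^ t"
    using binomial_le_pow[OF assms(3)] power_mono[of "card I" n t] card_mono[OF _ assms(2)] by simp
  finally show ?thesis by (simp add: of_nat_mono)
qed

lemma nn_integral_sum_indicator_subsets_card_add_le:
  fixes W :: "'a \<Rightarrow> nat set" and M :: "'a pmf"
  assumes "finite \<T>" "k \<le> n" "t \<le> k - k'" "\<And>x. W x \<subseteq> {0..<n}"
  shows "(\<integral>\<^sup>+x. \<integral>\<^sup>+I. (\<Sum>T\<in>\<T>. indicator {I. T \<subseteq> I \<and> card T + t = card I} I)
            \<partial>Iset_pmf n k k' (W x) \<partial>M) \<le> of_nat (n ^ t)"
proof -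
  have "(\<Sum>T\<in>\<T>. indicator {I. T \<subseteq> I \<and> card T + t = card I} I) \<le> (of_nat (n ^ t) :: ennreal)"
    if "I \<in> set_pmf (Iset_pmf n k k' (W x))" for x I
    using set_pmf_Iset_pmf[OF assms(4,2) that] assms(3)
    by (intro sum_indicator_subsets_card_add_le[OF assms(1)]) auto
  then have "(\<integral>\<^sup>+x. \<integral>\<^sup>+I. (\<Sum>T\<in>\<T>. indicator {I. T \<subseteq> I \<and> card T + t = card I} I)
            \<partial>Iset_pmf n k k' (W x) \<partial>M) \<le> (\<integral>\<^sup>+x. \<integral>\<^sup>+I. of_nat (n ^ t) \<partial>Iset_pmf n k k' (W x) \<partial>M)"
    by (intro nn_integral_mono nn_integral_mono_AE) (simp add: AE_measure_pmf_iff)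
  then show ?thesis by (simp add: measure_pmf.emeasure_space_1)
qed

(* Whether a vertex outside Q is eligible for I' does not depend on the edges between Q and T,
   so once I' is drawn from the eligible vertices outside Q the absence of these edges factors out. *)
lemma nn_integral_cross_edges_absent_le:
  fixes f :: "nat set \<Rightarrow> ennreal" and v :: "nat \<Rightarrow> nat" and m :: nat
  defines "M \<equiv> v ` {0..<m}"
  assumes p: "0 \<le> p" "p \<le> 1" and Q: "Q \<subseteq> {0..<n} - M" and T: "T \<subseteq> {0..<n} - Q"
  shows "(\<integral>\<^sup>+E. \<integral>\<^sup>+I. f I * indicator {I. Q \<inter> I = {}} I * indicator {E. E \<inter> cross_edges Q T = {}} E
            \<partial>Iset_pmf n k k' (no_nbr n (plant m H v E) M) \<partial>gnp_pmf n p)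
       \<le> (\<integral>\<^sup>+E. \<integral>\<^sup>+I. f I \<partial>Iset_pmf n k k' (no_nbr n (plant m H v E) M - Q) \<partial>gnp_pmf n p)
           * ennreal ((1 - p) ^ (card Q * card T))"
proof -
  define G where "G E = (\<integral>\<^sup>+I. f I \<partial>Iset_pmf n k k' (no_nbr n (plant m H v E) M - Q))" for E
  have fin: "finite (no_nbr n E M)" for E
    by (rule finite_subset[OF no_nbr_subset]) simp
  have QT: "Q \<inter> T = {}" using T by blast
  have "(\<integral>\<^sup>+E. \<integral>\<^sup>+I. f I * indicator {I. Q \<inter> I = {}} I * indicator {E. E \<inter> cross_edges Q T = {}} E
            \<partial>Iset_pmf n k k' (no_nbr n (plant m H v E) M) \<partial>gnp_pmf n p)
      = (\<integral>\<^sup>+E. (\<integral>\<^sup>+I. f I * indicator {I. Q \<inter> I = {}} I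
            \<partial>Iset_pmf n k k' (no_nbr n (plant m H v E) M)) * indicator {E. E \<inter> cross_edges Q T = {}} E
          \<partial>gnp_pmf n p)"
    by (simp add: nn_integral_multc)
  also have "\<dots> \<le> (\<integral>\<^sup>+E. G E * indicator {E. E \<inter> cross_edges Q T = {}} E \<partial>gnp_pmf n p)"
    unfolding G_def by (intro nn_integral_mono mult_right_mono nn_integral_Iset_pmf_disjoint_le fin) auto
  also have "\<dots> = (\<integral>\<^sup>+E. G E \<partial>gnp_pmf n p) * ennreal ((1 - p) ^ card (cross_edges Q T))"
  proof (rule nn_integral_gnp_pmf_indicator_disjoint[OF _ p])
    show "cross_edges Q T \<subseteq> all_edges {0..<n}"
      using Q T by (intro cross_edges_subset_all_edges) auto
    show "G E = G (E - cross_edges Q T)" for E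
      using Q unfolding G_def M_def by (subst no_nbr_plant_Diff_cross_edges) auto
  qed
  finally show ?thesis unfolding G_def card_cross_edges[OF QT] .
qed

lemma indicator_not_expanding_set_le_sum:
  fixes E :: "nat set set" and v :: "nat \<Rightarrow> nat"
  assumes I: "I \<subseteq> {0..<n}" "s \<le> card I" "t < s" and Q: "Q \<subseteq> {0..<n} - v ` {0..<m}"
  shows "indicator {I. Q \<inter> I = {} \<and>
           card {u \<in> I. \<exists>q \<in> Q. {q, u} \<in> delete_inside (plant m H v E) I} \<le> t} I
       \<le> (\<Sum>T \<in> {T. T \<subseteq> {0..<n} - Q \<and> s \<le> card T + t}.
            indicator {I. T \<subseteq> I \<and> card T + t = card I} I * indicator {I. Q \<inter> I = {}} I
            * indicator {E. E \<inter> cross_edges Q T = {}} E :: ennreal)"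
    (is "indicator {I. Q \<inter> I = {} \<and> ?few I} I \<le> (\<Sum>T \<in> ?\<T>. ?summand T)")
proof (cases "Q \<inter> I = {} \<and> ?few I")
  case True
  then have QI: "Q \<inter> I = {}" and few: "?few I" by auto
  have "finite I" using I(1) by (rule finite_subset) simp
  moreover have "t \<le> card I" using I by linarith
  moreover have "Q \<inter> (v ` {0..<m} \<union> I) = {}" using Q QI by blast
  ultimately obtain T where T: "T \<subseteq> I" "card T + t = card I" "E \<inter> cross_edges Q T = {}"
    using non_expanding_witness[OF _ _ _ few] by blast
  have "T \<in> ?\<T>" using T I QI by auto
  have fin: "finite ?\<T>" by (rule finite_subset[of _ "Pow {0..<n}"]) auto
  have "indicator {I. Q \<inter> I = {} \<and> ?few I} I = (1 :: ennreal)" using True by simp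
  also have "\<dots> = ?summand T" using T QI by (simp add: indicator_def)
  also have "\<dots> \<le> (\<Sum>T \<in> ?\<T>. ?summand T)"
    by (rule member_le_sum[OF \<open>T \<in> ?\<T>\<close> _ fin]) simp
  finally show ?thesis .
qed simp

lemma nn_integral_not_expanding_set_le:
  fixes v :: "nat \<Rightarrow> nat" and m :: nat and \<epsilon> :: real
  defines "M \<equiv> v ` {0..<m}"
  assumes p: "0 \<le> p" "p \<le> 1" and kn: "k \<le> n" and t: "t < k - k'"
    and Q: "Q \<subseteq> {0..<n} - M" "card Q = t"
    and \<epsilon>: "\<And>c. k - k' \<le> c + t \<Longrightarrow> (1 - p) ^ (t * c) \<le> \<epsilon>"
  shows "(\<integral>\<^sup>+E. \<integral>\<^sup>+I. indicator {I. Q \<inter> I = {} \<and>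
              card {u \<in> I. \<exists>q \<in> Q. {q, u} \<in> delete_inside (plant m H v E) I} \<le> t} I
            \<partial>Iset_pmf n k k' (no_nbr n (plant m H v E) M) \<partial>gnp_pmf n p)
       \<le> ennreal \<epsilon> * of_nat (n ^ t)"
proof -
  define \<T> where "\<T> = {T. T \<subseteq> {0..<n} - Q \<and> k - k' \<le> card T + t}"
  define f where "f T I = (indicator {I. T \<subseteq> I \<and> card T + t = card I} I :: ennreal)" for T I :: "nat set"
  define W where "W E = no_nbr n (plant m H v E) M" for E :: "nat set set"
  have fin: "finite \<T>" unfolding \<T>_def by (rule finite_subset[of _ "Pow {0..<n}"]) auto
  have W: "W E \<subseteq> {0..<n}" for E unfolding W_def by (rule no_nbr_subset)
  have "(\<integral>\<^sup>+E. \<integral>\<^sup>+I. indicator {I. Q \<inter> I = {} \<and>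
              card {u \<in> I. \<exists>q \<in> Q. {q, u} \<in> delete_inside (plant m H v E) I} \<le> t} I
            \<partial>Iset_pmf n k k' (W E) \<partial>gnp_pmf n p)
      \<le> (\<integral>\<^sup>+E. \<integral>\<^sup>+I. (\<Sum>T\<in>\<T>. f T I * indicator {I. Q \<inter> I = {}} I
              * indicator {E. E \<inter> cross_edges Q T = {}} E) \<partial>Iset_pmf n k k' (W E) \<partial>gnp_pmf n p)"
    using set_pmf_Iset_pmf[OF W kn] indicator_not_expanding_set_le_sum[OF _ _ t] Q
    unfolding \<T>_def f_def M_def
    by (intro nn_integral_mono nn_integral_mono_AE) (auto simp: AE_measure_pmf_iff)
  also have "\<dots> = (\<Sum>T\<in>\<T>. \<integral>\<^sup>+E. \<integral>\<^sup>+I. f T I * indicator {I. Q \<inter> I = {}} I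
              * indicator {E. E \<inter> cross_edges Q T = {}} E \<partial>Iset_pmf n k k' (W E) \<partial>gnp_pmf n p)"
    by (subst nn_integral_sum[symmetric]) (simp, rule nn_integral_cong, rule nn_integral_sum, simp)
  also have "\<dots> \<le> (\<Sum>T\<in>\<T>. (\<integral>\<^sup>+E. \<integral>\<^sup>+I. f T I \<partial>Iset_pmf n k k' (W E - Q) \<partial>gnp_pmf n p) * ennreal \<epsilon>)"
  proof (intro sum_mono)
    fix T assume "T \<in> \<T>"
    then have T: "T \<subseteq> {0..<n} - Q" and "(1 - p) ^ (card Q * card T) \<le> \<epsilon>"
      using \<epsilon> Q unfolding \<T>_def by auto
    then show "(\<integral>\<^sup>+E. \<integral>\<^sup>+I. f T I * indicator {I. Q \<inter> I = {}} I
              * indicator {E. E \<inter> cross_edges Q T = {}} E \<partial>Iset_pmf n k k' (W E) \<partial>gnp_pmf n p)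
        \<le> (\<integral>\<^sup>+E. \<integral>\<^sup>+I. f T I \<partial>Iset_pmf n k k' (W E - Q) \<partial>gnp_pmf n p) * ennreal \<epsilon>"
      unfolding W_def M_def
      using nn_integral_cross_edges_absent_le[OF p Q(1)[unfolded M_def] T]
      by (meson ennreal_leI mult_left_mono order_trans zero_le)
  qed
  also have "\<dots> = (\<integral>\<^sup>+E. \<integral>\<^sup>+I. (\<Sum>T\<in>\<T>. f T I) \<partial>Iset_pmf n k k' (W E - Q) \<partial>gnp_pmf n p) * ennreal \<epsilon>"
    using fin by (simp add: nn_integral_sum sum_distrib_right)
  also have "\<dots> \<le> of_nat (n ^ t) * ennreal \<epsilon>"
    using W t unfolding f_def
    by (intro mult_right_mono nn_integral_sum_indicator_subsets_card_add_le[OF fin kn]) auto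
  finally show ?thesis unfolding W_def by (simp add: mult.commute)
qed

definition expanding_outcomes :: "nat \<Rightarrow> nat \<Rightarrow> nat \<Rightarrow> (nat set set \<times> nat set \<times> nat set) set" where
  "expanding_outcomes n s t = {(E, M, I). \<forall>Q. Q \<subseteq> {0..<n} - (M \<union> I) \<and> card Q = t \<and> t < s \<longrightarrow>
      t + 1 \<le> card {u \<in> I. \<exists>q \<in> Q. {q, u} \<in> E}}"

lemma nn_integral_not_expanding_le:
  fixes v :: "nat \<Rightarrow> nat" and m :: nat and \<epsilon> :: real
  defines "M \<equiv> v ` {0..<m}"
  assumes p: "0 \<le> p" "p \<le> 1" and kn: "k \<le> n" and t: "t < k - k'"
    and \<epsilon>: "\<And>c. k - k' \<le> c + t \<Longrightarrow> (1 - p) ^ (t * c) \<le> \<epsilon>"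
  shows "(\<integral>\<^sup>+E. \<integral>\<^sup>+I. indicator (- expanding_outcomes n (k - k') t) (delete_inside (plant m H v E) I, M, I)
            \<partial>Iset_pmf n k k' (no_nbr n (plant m H v E) M) \<partial>gnp_pmf n p)
       \<le> of_nat (n choose t) * (ennreal \<epsilon> * of_nat (n ^ t))"
proof -
  define \<Q> where "\<Q> = {Q. Q \<subseteq> {0..<n} - M \<and> card Q = t}"
  define g where "g Q E I = (indicator {I. Q \<inter> I = {} \<and>
      card {u \<in> I. \<exists>q \<in> Q. {q, u} \<in> delete_inside (plant m H v E) I} \<le> t} I :: ennreal)"
    for Q E I
  have fin: "finite \<Q>" unfolding \<Q>_def by (rule finite_subset[of _ "Pow {0..<n}"]) auto
  have "indicator (- expanding_outcomes n (k - k') t) (delete_inside (plant m H v E) I, M, I)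
      \<le> (\<Sum>Q\<in>\<Q>. g Q E I)" for E I
  proof (cases "(delete_inside (plant m H v E) I, M, I) \<in> expanding_outcomes n (k - k') t")
    case False
    then obtain Q where "Q \<subseteq> {0..<n} - (M \<union> I)" "card Q = t"
      "card {u \<in> I. \<exists>q \<in> Q. {q, u} \<in> delete_inside (plant m H v E) I} \<le> t"
      using t unfolding expanding_outcomes_def by (auto simp: not_less_eq_eq)
    then have Q: "Q \<in> \<Q>" "g Q E I = 1" unfolding \<Q>_def g_def by (auto simp: indicator_def)
    then show ?thesis using False member_le_sum[OF Q(1) _ fin, of "\<lambda>Q. g Q E I"] by simp
  qed simp
  then have "(\<integral>\<^sup>+E. \<integral>\<^sup>+I. indicator (- expanding_outcomes n (k - k') t) (delete_inside (plant m H v E) I, M, I)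
            \<partial>Iset_pmf n k k' (no_nbr n (plant m H v E) M) \<partial>gnp_pmf n p)
      \<le> (\<integral>\<^sup>+E. \<integral>\<^sup>+I. (\<Sum>Q\<in>\<Q>. g Q E I) \<partial>Iset_pmf n k k' (no_nbr n (plant m H v E) M) \<partial>gnp_pmf n p)"
    by (intro nn_integral_mono)
  also have "\<dots> = (\<Sum>Q\<in>\<Q>. \<integral>\<^sup>+E. \<integral>\<^sup>+I. g Q E I \<partial>Iset_pmf n k k' (no_nbr n (plant m H v E) M) \<partial>gnp_pmf n p)"
    by (subst nn_integral_sum[symmetric]) (simp, rule nn_integral_cong, rule nn_integral_sum, simp)
  also have "\<dots> \<le> (\<Sum>Q\<in>\<Q>. ennreal \<epsilon> * of_nat (n ^ t))"
    unfolding g_def \<Q>_def M_def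
    by (intro sum_mono nn_integral_not_expanding_set_le[OF p kn t _ _ \<epsilon>]) auto
  also have "\<dots> \<le> of_nat (n choose t) * (ennreal \<epsilon> * of_nat (n ^ t))"
  proof -
    have "card \<Q> \<le> card {Q. Q \<subseteq> {0..<n} \<and> card Q = t}"
      unfolding \<Q>_def by (intro card_mono finite_subsets_card_eq) auto
    then show ?thesis by (simp add: n_subsets mult_right_mono)
  qed
  finally show ?thesis .
qed

lemma nn_integral_GH_pmf:
  "(\<integral>\<^sup>+x. f x \<partial>GH_pmf n m H p k k')
     = (\<integral>\<^sup>+v. \<integral>\<^sup>+E. \<integral>\<^sup>+I. f (delete_inside (plant m H v E) I, v ` {0..<m}, I)
          \<partial>Iset_pmf n k k' (no_nbr n (plant m H v E) (v ` {0..<m})) \<partial>gnp_pmf n p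
          \<partial>pmf_of_set (PiE {0..<m} (part n m)))"
  unfolding GH_pmf_def by (subst bind_commute_pmf) (simp add: Let_def)

lemma one_minus_p_power_le:
  fixes n s t c :: nat and p \<delta> :: real
  assumes n: "1 \<le> n" and \<delta>: "\<delta> < 1" and p: "p = real n powr (\<delta> - 1)"
    and s: "6 * real n powr (1 - \<delta>) * ln (real n) \<le> real s" and t: "real t \<le> real s / 2"
    and c: "s \<le> c + t"
  shows "(1 - p) ^ (t * c) \<le> 1 / real n ^ (3 * t)"
proof -
  have "p \<le> 1" using p n \<delta> powr_mono[of "\<delta> - 1" 0 "real n"] by simp
  have "p * real n powr (1 - \<delta>) = 1" using p n by (simp add: powr_add[symmetric])
  then have "6 * ln (real n) \<le> p * real s"
    using mult_left_mono[OF s, of p] p by (simp add: algebra_simps)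
  moreover have "real s \<le> 2 * real c" using c t by linarith
  ultimately have "3 * real t * ln (real n) \<le> p * real t * real c"
    using p mult_left_mono[of "6 * ln (real n)" "p * real s" "real t / 2"]
      mult_left_mono[of "real s" "2 * real c" "p * real t / 2"] by (simp add: algebra_simps)
  have "exp (real (3 * t) * ln (real n)) = real n ^ (3 * t)"
    using n by (subst exp_of_nat_mult) simp
  have "(1 - p) ^ (t * c) \<le> exp (- p) ^ (t * c)"
    using \<open>p \<le> 1\<close> by (intro power_mono) (auto simp: exp_ge_add_one_self[of "-p", simplified])
  also have "\<dots> = exp (- (p * real t * real c))"
    by (simp add: exp_of_nat_mult[symmetric] mult.commute mult.left_commute)
  also have "\<dots> \<le> exp (- (real (3 * t) * ln (real n)))"
    using \<open>3 * real t * ln (real n) \<le> p * real t * real c\<close> by simp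
  also have "\<dots> = 1 / real n ^ (3 * t)"
    using \<open>exp (real (3 * t) * ln (real n)) = _\<close> by (simp add: exp_minus inverse_eq_divide)
  finally show ?thesis .
qed

lemma choose_mult_power_le_inverse:
  assumes "1 \<le> n" "1 \<le> t"
  shows "of_nat (n choose t) * (ennreal (1 / real n ^ (3 * t)) * of_nat (n ^ t)) \<le> ennreal (1 / real n)"
proof -
  have "n choose t \<le> n ^ t"
    by (cases "t \<le> n") (simp_all add: binomial_le_pow binomial_eq_0)
  then have "real (n choose t) * (1 / real n ^ (3 * t)) * real n ^ t
      \<le> real n ^ t * (1 / real n ^ (3 * t)) * real n ^ t"
    by (intro mult_right_mono) (simp_all flip: of_nat_power)
  also have "\<dots> = 1 / real n ^ t"
  proof -
    have "real n ^ (3 * t) = (real n ^ t) ^ 3" by (simp add: power_mult mult.commute)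
    moreover have "real n ^ t > 0" using assms by simp
    ultimately show ?thesis by (simp add: power3_eq_cube)
  qed
  also have "\<dots> \<le> 1 / real n"
    using assms power_increasing[of 1 t "real n"] by (simp add: divide_left_mono)
  finally have "ennreal (real (n choose t) * (1 / real n ^ (3 * t) * real n ^ t)) \<le> ennreal (1 / real n)"
    by (intro ennreal_leI) (simp only: mult.assoc)
  also have "ennreal (real (n choose t) * (1 / real n ^ (3 * t) * real n ^ t))
      = of_nat (n choose t) * (ennreal (1 / real n ^ (3 * t)) * of_nat (n ^ t))"
    by (simp add: ennreal_of_nat_eq_real_of_nat flip: ennreal_mult)
  finally show ?thesis .
qed

theorem lemmaC5:
  fixes n m k k' t :: nat and \<delta> p :: real and H :: "nat set set"
  assumes "0 < \<delta>" "\<delta> < 1"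
    and "p = real n powr (\<delta> - 1)"
    and "H \<subseteq> all_edges {0..<m}"
    and "m dvd n"
    and "k' \<le> m" "k' \<le> k" "k \<le> n - m"
    and "real (k - k') \<ge> 6 * real n powr (1 - \<delta>) * ln (real n)"
    and "1 \<le> t" "real t \<le> real (k - k') / 2"
  shows "measure_pmf.prob (GH_pmf n m H p k k')
           {(E, M, I). \<forall>Q. Q \<subseteq> {0..<n} - (M \<union> I) \<and> card Q = t \<and> t < k - k' \<longrightarrow>
               t + 1 \<le> card {u \<in> I. \<exists>q \<in> Q. {q, u} \<in> E}}
         \<ge> 1 - 2 / real n"
proof -
  let ?G = "GH_pmf n m H p k k'" and ?good = "expanding_outcomes n (k - k') t"
  have t: "t < k - k'" and kn: "k \<le> n" and n: "1 \<le> n" using assms(8,10,11) by linarith+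
  have p: "0 \<le> p" "p \<le> 1" using assms(2,3) n powr_mono[of "\<delta> - 1" 0 "real n"] by simp_all
  have \<epsilon>: "(1 - p) ^ (t * c) \<le> 1 / real n ^ (3 * t)" if "k - k' \<le> c + t" for c
    using one_minus_p_power_le[OF n assms(2,3,9,11) that] .
  have "emeasure ?G (- ?good) = (\<integral>\<^sup>+x. indicator (- ?good) x \<partial>?G)" by simp
  also have "\<dots> \<le> (\<integral>\<^sup>+v. ennreal (1 / real n) \<partial>pmf_of_set (PiE {0..<m} (part n m)))"
    unfolding nn_integral_GH_pmf
    by (intro nn_integral_mono order_trans[OF nn_integral_not_expanding_le[OF p kn t \<epsilon>]]
        choose_mult_power_le_inverse n assms(10))
  finally have "measure_pmf.prob ?G (- ?good) \<le> 1 / real n"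
    by (simp add: measure_pmf.emeasure_eq_measure measure_pmf.emeasure_space_1 ennreal_le_iff)
  moreover have "measure_pmf.prob ?G ?good = 1 - measure_pmf.prob ?G (- ?good)"
    using measure_pmf.prob_compl[of "- ?good" ?G] by (simp add: Compl_eq_Diff_UNIV double_diff)
  moreover have "1 / real n \<le> 2 / real n" by (intro divide_right_mono) auto
  ultimately have "1 - 2 / real n \<le> measure_pmf.prob ?G ?good" by linarith
  then show ?thesis unfolding expanding_outcomes_def .
qed

end
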